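(* Let $\mathbb{S}\in\mathbb{Z}^{N_X\times N_e}$, let $\mathbb{V}\in\mathbb{R}^{N_e\times N_z}$ be a matrix whose columns form a basis of $\mathrm{Ker}\,\mathbb{S}$, and let $\Psi^*_x$ be a dissipation function on $\mathbb{R}^{N_e}$ (for a fixed $x$). For a given $\zeta\in\mathrm{Im}\,\mathbb{V}^T=\mathbb{R}^{N_z}$, define $$f^\lozenge(x,\zeta):=\arg\min_{f\in\mathbb{R}^{N_e}}\Psi^*_x(f)\quad\text{subject to } \mathbb{V}^Tf=\zeta.$$ Then $f^\lozenge(x,\zeta)$ is a steady (zero-velocity) force: $j^\lozenge:=\nabla\Psi^*_x(f^\lozenge(x,\zeta))$ satisfies $\mathbb{S}j^\lozenge=0$.
   Context: A dissipation function on $\mathbb{R}^{N_e}$ is a strictly convex, continuously differentiable, $1$-coercive ($\psi(f)/\|f\|\to\infty$ as $\|f\|\to\infty$), even function $\psi$ with $\psi(0)=0$. Note $\mathrm{Ker}\,\mathbb{V}^T=\mathrm{Im}\,\mathbb{S}^T$ and $\mathrm{Im}\,\mathbb{V}=\mathrm{Ker}\,\mathbb{S}$. *)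

theory Defs
  imports "HOL-Analysis.Analysis"
begin

definition strictly_convex_on :: "'a::real_vector set \<Rightarrow> ('a \<Rightarrow> real) \<Rightarrow> bool" where
  "strictly_convex_on A f \<longleftrightarrow> convex A \<and>
     (\<forall>x\<in>A. \<forall>y\<in>A. x \<noteq> y \<longrightarrow> (\<forall>t::real. 0 < t \<and> t < 1 \<longrightarrow>
        f ((1 - t) *\<^sub>R x + t *\<^sub>R y) < (1 - t) * f x + t * f y))"

definition dissipation_function :: "('a::euclidean_space \<Rightarrow> real) \<Rightarrow> bool" where
  "dissipation_function \<psi> \<longleftrightarrow>
     strictly_convex_on UNIV \<psi> \<and>
     (\<exists>g. continuous_on UNIV g \<and> (\<forall>f. GDERIV \<psi> f :> g f)) \<and>
     filterlim (\<lambda>f. \<psi> f / norm f) at_top at_infinity \<and>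
     (\<forall>f. \<psi> (- f) = \<psi> f) \<and>
     \<psi> 0 = 0"

end

theory Submission
  imports Defs
begin

text \<open>The minimiser satisfies the Lagrange condition: moving along any direction \<open>h\<close> with
  \<open>V\<^sup>T h = 0\<close> keeps the constraint, so \<open>\<nabla>\<Psi>(f\<^sup>\<lozenge>)\<close> is orthogonal to \<open>Ker V\<^sup>T\<close>.
  Hence it lies in \<open>(Ker V\<^sup>T)\<^sup>\<bottom> = Im V = Ker S\<close>. Only differentiability of \<open>\<Psi>\<close> is used:
  convexity, coercivity and the integrality of \<open>S\<close> serve to make the minimiser exist and be
  unique, which the theorem takes as a hypothesis.\<close>

lemma gderiv_orthogonal_at_line_min:
  fixes f :: "'a::real_inner \<Rightarrow> real"
  assumes "GDERIV f x :> g"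
    and min: "\<And>t::real. f x \<le> f (x + t *\<^sub>R h)"
  shows "g \<bullet> h = 0"
proof -
  have "(f has_derivative (\<lambda>k. k \<bullet> g)) (at (x + 0 *\<^sub>R h))"
    using assms(1) by (simp add: gderiv_def)
  then have "((\<lambda>t::real. f (x + t *\<^sub>R h)) has_derivative (\<lambda>t. (t *\<^sub>R h) \<bullet> g)) (at 0)"
    by (rule has_derivative_compose[rotated]) (auto intro!: derivative_eq_intros)
  moreover have "eventually (\<lambda>t. f (x + 0 *\<^sub>R h) \<le> f (x + t *\<^sub>R h)) (at (0::real))"
    using min by simp
  ultimately have "(\<lambda>t::real. (t *\<^sub>R h) \<bullet> g) = (\<lambda>t. 0)"
    by (rule has_derivative_local_min)
  then show ?thesis
    by (metis inner_commute scale_one)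
qed

lemma range_matrix_vector_mult_eq_span_columns:
  fixes A :: "real ^ 'n ^ 'm"
  shows "range ((*v) A) = span (columns A)"
proof
  show "range ((*v) A) \<subseteq> span (columns A)"
    using matrix_vector_mult_in_columnspace by blast
  have "subspace (range ((*v) A))"
    by (simp add: linear_subspace_image subspace_UNIV)
  then show "span (columns A) \<subseteq> range ((*v) A)"
    by (intro span_minimal) (auto simp: columns_image_basis)
qed

lemma orthogonal_comp_null_space_transpose:
  fixes A :: "real ^ 'n ^ 'm"
  shows "{h. transpose A *v h = 0}\<^sup>\<bottom> = span (columns A)"
proof -
  have "{h. transpose A *v h = 0} = (range ((*v) A))\<^sup>\<bottom>"
    using ker_orthogonal_comp_adjoint[of "(*v) (transpose A)"]
    by (auto simp: adjoint_matrix)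
  then show ?thesis
    by (simp add: orthogonal_comp_self subspace_span range_matrix_vector_mult_eq_span_columns)
qed

lemma gderiv_in_span_columns_at_constrained_min:
  fixes V :: "real ^ 'z ^ 'e" and \<Psi> :: "real ^ 'e \<Rightarrow> real"
  assumes "GDERIV \<Psi> f0 :> g"
    and min: "\<And>f. transpose V *v f = transpose V *v f0 \<Longrightarrow> \<Psi> f0 \<le> \<Psi> f"
  shows "g \<in> span (columns V)"
proof -
  have "orthogonal h g" if "transpose V *v h = 0" for h
  proof -
    have "\<Psi> f0 \<le> \<Psi> (f0 + t *\<^sub>R h)" for t
      using that by (intro min) (simp add: matrix_vector_right_distrib matrix_vector_mult_scaleR)
    then have "g \<bullet> h = 0"
      by (rule gderiv_orthogonal_at_line_min[OF assms(1)])
    then show ?thesis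
      by (simp add: orthogonal_def inner_commute)
  qed
  then have "g \<in> {h. transpose V *v h = 0}\<^sup>\<bottom>"
    by (simp add: orthogonal_comp_def)
  then show ?thesis
    by (simp only: orthogonal_comp_null_space_transpose)
qed

theorem mainTheorem11:
  fixes S :: "real ^ 'e ^ 'x" and V :: "real ^ 'z ^ 'e"
    and \<Psi> :: "real ^ 'e \<Rightarrow> real" and grad :: "real ^ 'e \<Rightarrow> real ^ 'e"
    and \<zeta> :: "real ^ 'z" and f0 :: "real ^ 'e"
  assumes S_int: "\<forall>i j. S $ i $ j \<in> \<int>"
    and V_indep: "independent (columns V)"
    and V_inj: "inj (\<lambda>j. column j V)"
    and V_span: "span (columns V) = {v. S *v v = 0}"
    and diss: "dissipation_function \<Psi>"
    and grad: "\<forall>f. GDERIV \<Psi> f :> grad f"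
    and f0_feas: "transpose V *v f0 = \<zeta>"
    and f0_min: "\<forall>f. transpose V *v f = \<zeta> \<longrightarrow> \<Psi> f0 \<le> \<Psi> f"
  shows "S *v grad f0 = 0"
proof -
  have "grad f0 \<in> span (columns V)"
    using grad f0_min f0_feas
    by (intro gderiv_in_span_columns_at_constrained_min[of \<Psi> f0]) auto
  then show ?thesis
    using V_span by simp
qed

end
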